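(* Let $G$ be a random $(d_1,d_2)$-biregular bipartite graph with $d_1\geq d_2$ and $d_1=o(n^\epsilon)$ for every $\epsilon>0$. Fix an integer $R$ and let $\tau_1$ be the set of vertices in $V_1$ whose $R$-neighborhood contains no cycle. Then $$\mathbb P\left(\frac{n-|\tau_1|}{n}>n^{-1/4}\right)=o(n^{-5/4}).$$
   Context: A $(d_1,d_2)$-biregular bipartite graph on $V_1=[n]$, $V_2=[m]$ is a simple bipartite graph with degrees $d_1$ on $V_1$ and $d_2$ on $V_2$; a random one is uniform among all such. The $R$-neighborhood of a vertex is the subgraph induced by vertices at graph distance at most $R$ from it. *)

theory Defs
  imports Complex_Main "HOL-Library.Landau_Symbols"
begin

text \<open>A bipartite graph with parts V1 = [n] (encoded as Inl i, i < n) and V2 = [m]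
(encoded as Inr j, j < m) is given by its edge set E \<subseteq> {..<n} \<times> {..<m}.\<close>

definition biregular :: "nat \<Rightarrow> nat \<Rightarrow> nat \<Rightarrow> nat \<Rightarrow> (nat \<times> nat) set \<Rightarrow> bool" where
  "biregular n m d1 d2 E \<longleftrightarrow>
     E \<subseteq> {..<n} \<times> {..<m} \<and>
     (\<forall>i<n. card {j. (i, j) \<in> E} = d1) \<and>
     (\<forall>j<m. card {i. (i, j) \<in> E} = d2)"

definition biregular_graphs :: "nat \<Rightarrow> nat \<Rightarrow> nat \<Rightarrow> nat \<Rightarrow> (nat \<times> nat) set set" where
  "biregular_graphs n m d1 d2 = {E. biregular n m d1 d2 E}"

fun badj :: "(nat \<times> nat) set \<Rightarrow> nat + nat \<Rightarrow> nat + nat \<Rightarrow> bool" where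
  "badj E (Inl i) (Inr j) \<longleftrightarrow> (i, j) \<in> E"
| "badj E (Inr j) (Inl i) \<longleftrightarrow> (i, j) \<in> E"
| "badj E _ _ \<longleftrightarrow> False"

definition within_dist :: "(nat \<times> nat) set \<Rightarrow> nat \<Rightarrow> nat + nat \<Rightarrow> nat + nat \<Rightarrow> bool" where
  "within_dist E R u v \<longleftrightarrow>
     (\<exists>xs. xs \<noteq> [] \<and> hd xs = u \<and> last xs = v \<and> length xs \<le> Suc R \<and>
           (\<forall>k. Suc k < length xs \<longrightarrow> badj E (xs ! k) (xs ! Suc k)))"

definition ball_R :: "(nat \<times> nat) set \<Rightarrow> nat \<Rightarrow> nat + nat \<Rightarrow> (nat + nat) set" where
  "ball_R E R v = {u. within_dist E R v u}"

definition has_cycle_in :: "(nat \<times> nat) set \<Rightarrow> (nat + nat) set \<Rightarrow> bool" where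
  "has_cycle_in E S \<longleftrightarrow>
     (\<exists>cs. 3 \<le> length cs \<and> distinct cs \<and> set cs \<subseteq> S \<and>
           (\<forall>k<length cs. badj E (cs ! k) (cs ! ((Suc k) mod length cs))))"

definition tau1 :: "nat \<Rightarrow> (nat \<times> nat) set \<Rightarrow> nat \<Rightarrow> nat set" where
  "tau1 n E R = {i. i < n \<and> \<not> has_cycle_in E (ball_R E R (Inl i))}"

definition prob_bireg :: "nat \<Rightarrow> nat \<Rightarrow> nat \<Rightarrow> nat \<Rightarrow> ((nat \<times> nat) set \<Rightarrow> bool) \<Rightarrow> real" where
  "prob_bireg n m d1 d2 P =
     real (card {E \<in> biregular_graphs n m d1 d2. P E}) / real (card (biregular_graphs n m d1 d2))"

end

theory Submission
  imports Defs
begin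

text \<open>If the R-ball of a vertex contains a cycle, it contains one of length at most 2R.
So the number of bad vertices is at most (1 + d1)^R times the number s of cycles of length
at most 2R, and many bad vertices force s > n^(3/4) / (1 + d1)^R. A short cycle meets at most
(2R + 1) (1 + d1)^(16 R^2) others, so at least s^2/2 ordered pairs of short cycles are
vertex-disjoint. A switching argument shows that a fixed set F of edges is present with
probability at most (d1 d2 / (n d1 - O(d1 d2)))^|F|; hence the expected number of disjoint
pairs is at most ((2R + 1) (4 (1 + d1))^(2R))^2. Markov's inequality bounds the probability
by a constant times (1 + d1)^(6R) n^(-3/2), which is o(n^(-5/4)) because d1 grows more slowly
than every power of n.\<close>

section \<open>Walks and distance\<close>

lemma badj_commute: "badj E x y = badj E y x"
  by (cases x; cases y) auto

lemma badj_mono: "E \<subseteq> E' \<Longrightarrow> badj E x y \<Longrightarrow> badj E' x y"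
  by (cases x; cases y) auto

lemma badj_isl: "badj E x y \<Longrightarrow> isl y \<longleftrightarrow> \<not> isl x"
  by (cases x; cases y) auto

lemma within_dist_iff_successively:
  "within_dist E r u v \<longleftrightarrow>
     (\<exists>xs. xs \<noteq> [] \<and> hd xs = u \<and> last xs = v \<and> length xs \<le> Suc r \<and> successively (badj E) xs)"
  unfolding within_dist_def successively_conv_nth by blast

lemma within_dist_refl: "within_dist E r v v"
  unfolding within_dist_iff_successively by (rule exI[of _ "[v]"]) auto

lemma within_dist_mono: "within_dist E r u v \<Longrightarrow> r \<le> r' \<Longrightarrow> within_dist E r' u v"
  unfolding within_dist_iff_successively by fastforce

lemma within_dist_0_iff: "within_dist E 0 u v \<longleftrightarrow> u = v"
proof
  assume "within_dist E 0 u v"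
  then obtain xs where "xs \<noteq> []" "hd xs = u" "last xs = v" "length xs \<le> 1"
    unfolding within_dist_iff_successively by auto
  then show "u = v" by (cases xs) auto
qed (simp add: within_dist_refl)

lemma within_dist_sym:
  assumes "within_dist E r u v"
  shows "within_dist E r v u"
proof -
  obtain xs where xs: "xs \<noteq> []" "hd xs = u" "last xs = v" "length xs \<le> Suc r" "successively (badj E) xs"
    using assms unfolding within_dist_iff_successively by blast
  have "successively (badj E) (rev xs)"
    using xs(5) by (simp add: successively_rev badj_commute[of E])
  with xs show ?thesis
    unfolding within_dist_iff_successively by (intro exI[of _ "rev xs"]) (simp add: hd_rev last_rev)
qed

lemma within_dist_trans:
  assumes "within_dist E a u v" "within_dist E b v w"
  shows "within_dist E (a + b) u w"
proof -
  obtain xs where xs: "xs \<noteq> []" "hd xs = u" "last xs = v" "length xs \<le> Suc a" "successively (badj E) xs"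
    using assms(1) unfolding within_dist_iff_successively by blast
  obtain ys where ys: "ys \<noteq> []" "hd ys = v" "last ys = w" "length ys \<le> Suc b" "successively (badj E) ys"
    using assms(2) unfolding within_dist_iff_successively by blast
  obtain ys' where ys_eq: "ys = v # ys'" using ys(1,2) by (cases ys) auto
  have "successively (badj E) (xs @ ys')"
    using xs(3,5) ys(5) unfolding ys_eq successively_Cons successively_append_iff by auto
  moreover have "last (xs @ ys') = w" using xs(1,3) ys(3) unfolding ys_eq by (auto split: if_splits)
  moreover have "length (xs @ ys') \<le> Suc (a + b)" using xs(4) ys(4) unfolding ys_eq by simp
  ultimately show ?thesis
    unfolding within_dist_iff_successively using xs(1,2) by (intro exI[of _ "xs @ ys'"]) simp
qed

lemma within_dist_Suc_iff:
  "within_dist E (Suc r) u w \<longleftrightarrow> within_dist E r u w \<or> (\<exists>v. within_dist E r u v \<and> badj E v w)"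
proof
  assume "within_dist E (Suc r) u w"
  then obtain xs where xs: "xs \<noteq> []" "hd xs = u" "last xs = w" "length xs \<le> Suc (Suc r)"
    "successively (badj E) xs"
    unfolding within_dist_iff_successively by blast
  show "within_dist E r u w \<or> (\<exists>v. within_dist E r u v \<and> badj E v w)"
  proof (cases "length xs \<le> Suc r")
    case True
    then show ?thesis using xs unfolding within_dist_iff_successively by blast
  next
    case False
    then have "length (butlast xs) > 0" by simp
    then have ne: "butlast xs \<noteq> []" by force
    have "successively (badj E) (butlast xs @ [w])"
      using xs(5) by (subst (asm) append_butlast_last_id[OF xs(1), symmetric]) (simp add: xs(3))
    then have walk: "successively (badj E) (butlast xs)" and last_step: "badj E (last (butlast xs)) w"
      using ne by (simp_all add: successively_append_iff)
    have "hd (butlast xs) = u" using xs(1,2) ne by (metis append_butlast_last_id hd_append2)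
    moreover have "length (butlast xs) \<le> Suc r" using xs(4) by simp
    ultimately have "within_dist E r u (last (butlast xs))"
      unfolding within_dist_iff_successively using ne walk by blast
    then show ?thesis using last_step by blast
  qed
next
  assume "within_dist E r u w \<or> (\<exists>v. within_dist E r u v \<and> badj E v w)"
  then show "within_dist E (Suc r) u w"
  proof
    assume "within_dist E r u w"
    then show ?thesis by (rule within_dist_mono) simp
  next
    assume "\<exists>v. within_dist E r u v \<and> badj E v w"
    then obtain v where v: "within_dist E r u v" "badj E v w" by blast
    have "within_dist E 1 v w"
      unfolding within_dist_iff_successively using v(2) by (intro exI[of _ "[v, w]"]) simp
    from within_dist_trans[OF v(1) this] show ?thesis by simp
  qed
qed

text \<open>Only meaningful when x is reachable from v; otherwise it is LEAST of an empty set.\<close>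
definition bdist :: "(nat \<times> nat) set \<Rightarrow> nat + nat \<Rightarrow> nat + nat \<Rightarrow> nat" where
  "bdist E v x = (LEAST k. within_dist E k v x)"

lemma within_dist_bdist: "within_dist E r v x \<Longrightarrow> within_dist E (bdist E v x) v x"
  unfolding bdist_def by (rule LeastI)

lemma bdist_le: "within_dist E r v x \<Longrightarrow> bdist E v x \<le> r"
  unfolding bdist_def by (rule Least_le)

lemma isl_successively:
  assumes "successively (badj E) xs" "k < length xs"
  shows "isl (xs ! k) \<longleftrightarrow> (isl (xs ! 0) \<longleftrightarrow> even k)"
  using assms(2)
proof (induction k)
  case (Suc k)
  then have "badj E (xs ! k) (xs ! Suc k)" using assms(1) by (simp add: successively_nth)
  then show ?case using Suc by (simp add: badj_isl)
qed simp

lemma isl_bdist: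
  assumes "within_dist E r v x"
  shows "isl x \<longleftrightarrow> (isl v \<longleftrightarrow> even (bdist E v x))"
proof -
  obtain xs where xs: "xs \<noteq> []" "hd xs = v" "last xs = x" "length xs \<le> Suc (bdist E v x)"
    "successively (badj E) xs"
    using within_dist_bdist[OF assms] unfolding within_dist_iff_successively by blast
  have "within_dist E (length xs - 1) v x"
    unfolding within_dist_iff_successively using xs by auto
  then have "bdist E v x = length xs - 1" using xs(4) bdist_le by fastforce
  moreover have "x = xs ! (length xs - 1)" "v = xs ! 0"
    using xs(1,2,3) by (simp_all add: last_conv_nth hd_conv_nth)
  ultimately show ?thesis using isl_successively[OF xs(5), of "length xs - 1"] xs(1) by simp
qed

lemma bdist_adjacent:
  assumes "within_dist E r v x" "badj E x y"
  shows "bdist E v y \<le> Suc (bdist E v x)" "bdist E v y \<noteq> bdist E v x"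
proof -
  have y: "within_dist E (Suc (bdist E v x)) v y"
    using within_dist_bdist[OF assms(1)] assms(2) within_dist_Suc_iff by blast
  then show "bdist E v y \<le> Suc (bdist E v x)" by (rule bdist_le)
  show "bdist E v y \<noteq> bdist E v x"
    using isl_bdist[OF y] isl_bdist[OF assms(1)] badj_isl[OF assms(2)] by auto
qed

lemma bdist_parent:
  assumes "within_dist E r v x" "bdist E v x = Suc k"
  obtains p where "badj E p x" "within_dist E k v p" "bdist E v p = k"
proof -
  have "within_dist E (Suc k) v x" "\<not> within_dist E k v x"
    using within_dist_bdist[OF assms(1)] bdist_le[of E k v x] assms(2) by auto
  then obtain p where p: "within_dist E k v p" "badj E p x" using within_dist_Suc_iff by blast
  have "bdist E v p = k" using bdist_le[OF p(1)] bdist_adjacent(1)[OF p] assms(2) by simp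
  with p that show thesis by blast
qed

text \<open>The path climbs from x1 through its ancestors in the BFS tree of v and descends to x2.\<close>
lemma bfs_tree_path:
  assumes "within_dist E k v x1" "within_dist E k v x2" "x1 \<noteq> x2"
    "bdist E v x1 = k" "bdist E v x2 = k"
  shows "\<exists>q. q \<noteq> [] \<and> hd q = x1 \<and> last q = x2 \<and> distinct q \<and> length q \<le> 2 * k + 1 \<and>
             successively (badj E) q \<and> (\<forall>y\<in>set q. within_dist E k v y)"
  using assms
proof (induction k arbitrary: x1 x2)
  case 0
  then show ?case by (simp add: within_dist_0_iff)
next
  case (Suc k)
  obtain p1 where p1: "badj E p1 x1" "within_dist E k v p1" "bdist E v p1 = k"
    using bdist_parent[OF Suc.prems(1,4)] .
  obtain p2 where p2: "badj E p2 x2" "within_dist E k v p2" "bdist E v p2 = k"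
    using bdist_parent[OF Suc.prems(2,5)] .
  have up: "within_dist E (Suc k) v p1" "within_dist E (Suc k) v p2"
    using p1(2) p2(2) within_dist_mono by auto
  show ?case
  proof (cases "p1 = p2")
    case True
    have "distinct [x1, p1, x2]" using Suc.prems(3-5) p1(3) p2(3) True by auto
    moreover have "successively (badj E) [x1, p1, x2]"
      using p1(1) p2(1) True by (simp add: badj_commute)
    ultimately show ?thesis using Suc.prems(1,2) up by (intro exI[of _ "[x1, p1, x2]"]) auto
  next
    case False
    obtain q where q: "q \<noteq> []" "hd q = p1" "last q = p2" "distinct q" "length q \<le> 2 * k + 1"
      "successively (badj E) q" "\<forall>y\<in>set q. within_dist E k v y"
      using Suc.IH[OF p1(2) p2(2) False p1(3) p2(3)] by blast
    have "x1 \<notin> set q" "x2 \<notin> set q" using q(7) Suc.prems(4,5) bdist_le by fastforce+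
    then have "distinct (x1 # q @ [x2])" using q(4) Suc.prems(3) by simp
    moreover have "successively (badj E) (x1 # q @ [x2])"
      using q(1,2,3,6) p1(1) p2(1)
      by (auto simp: successively_append_iff successively_Cons badj_commute[of E x1])
    moreover have "\<forall>y\<in>set q. within_dist E (Suc k) v y" using q(7) within_dist_mono by auto
    ultimately show ?thesis using Suc.prems(1,2) q(1,5) by (intro exI[of _ "x1 # q @ [x2]"]) auto
  qed
qed

section \<open>Short cycles in balls\<close>

definition closed_walk :: "(nat \<times> nat) set \<Rightarrow> (nat + nat) list \<Rightarrow> bool" where
  "closed_walk E c \<longleftrightarrow> (\<forall>k<length c. badj E (c ! k) (c ! (Suc k mod length c)))"

definition short_cycles :: "(nat \<times> nat) set \<Rightarrow> nat \<Rightarrow> (nat + nat) list set" where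
  "short_cycles E L = {c. 3 \<le> length c \<and> length c \<le> L \<and> distinct c \<and> closed_walk E c}"

lemma closed_walk_iff_successively:
  assumes "c \<noteq> []"
  shows "closed_walk E c \<longleftrightarrow> successively (badj E) c \<and> badj E (last c) (hd c)"
proof
  assume cw: "closed_walk E c"
  have "badj E (c ! k) (c ! Suc k)" if "Suc k < length c" for k
    using cw that unfolding closed_walk_def by (metis Suc_lessD mod_less)
  moreover have "badj E (last c) (hd c)"
    using cw[unfolded closed_walk_def, rule_format, of "length c - 1"] assms
    by (simp add: last_conv_nth hd_conv_nth)
  ultimately show "successively (badj E) c \<and> badj E (last c) (hd c)"
    by (simp add: successively_conv_nth)
next
  assume walk: "successively (badj E) c \<and> badj E (last c) (hd c)"
  show "closed_walk E c"
    unfolding closed_walk_def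
  proof (intro allI impI)
    fix k assume k: "k < length c"
    show "badj E (c ! k) (c ! (Suc k mod length c))"
    proof (cases "Suc k = length c")
      case True
      then have "k = length c - 1" by simp
      then show ?thesis using walk assms by (simp add: last_conv_nth hd_conv_nth)
    next
      case False
      then show ?thesis using walk k by (simp add: successively_nth)
    qed
  qed
qed

lemma closed_walk_neighbours:
  assumes "3 \<le> length c" "distinct c" "closed_walk E c" "u \<in> set c"
  obtains w1 w2 where "w1 \<in> set c" "w2 \<in> set c" "w1 \<noteq> w2" "badj E u w1" "badj E u w2"
proof -
  let ?l = "length c"
  obtain j where j: "j < ?l" "c ! j = u" using assms(4) by (auto simp: in_set_conv_nth)
  define i1 where "i1 = (if Suc j = ?l then 0 else Suc j)"
  define i2 where "i2 = (if j = 0 then ?l - 1 else j - 1)"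
  have idx: "i1 < ?l" "i2 < ?l" "i1 \<noteq> i2" "Suc j mod ?l = i1" "Suc i2 mod ?l = j"
    using assms(1) j(1) by (auto simp: i1_def i2_def mod_Suc)
  have "badj E u (c ! i1)" "badj E (c ! i2) u"
    using assms(3) j idx(2,4,5) unfolding closed_walk_def by metis+
  moreover have "c ! i1 \<noteq> c ! i2" using assms(2) idx(1-3) by (simp add: nth_eq_iff_index_eq)
  ultimately show thesis using that idx(1,2) by (metis badj_commute nth_mem)
qed

text \<open>A vertex of maximal distance from v on a cycle in the ball has two neighbours one
step closer to v; joining them through the BFS tree closes a cycle of length at most 2R.\<close>
lemma short_cycle_in_ball:
  assumes "has_cycle_in E (ball_R E R v)"
  obtains c where "c \<in> short_cycles E (2 * R)" "set c \<subseteq> ball_R E R v"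
proof -
  obtain cs where cs: "3 \<le> length cs" "distinct cs" "set cs \<subseteq> ball_R E R v" "closed_walk E cs"
    using assms unfolding has_cycle_in_def closed_walk_def by blast
  have in_ball: "within_dist E R v y" if "y \<in> set cs" for y
    using cs(3) that unfolding ball_R_def by auto
  have "cs \<noteq> []" using cs(1) by auto
  moreover have "\<forall>y. y \<in> set cs \<longrightarrow> bdist E v y < Suc R"
    using in_ball bdist_le by (simp add: le_imp_less_Suc)
  ultimately obtain u where u: "u \<in> set cs" "\<forall>y. y \<in> set cs \<longrightarrow> bdist E v y \<le> bdist E v u"
    using Lattices_Big.ex_has_greatest_nat[of "\<lambda>y. y \<in> set cs", OF hd_in_set] by blast
  obtain w1 w2 where w: "w1 \<in> set cs" "w2 \<in> set cs" "w1 \<noteq> w2" "badj E u w1" "badj E u w2"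
    using closed_walk_neighbours[OF cs(1,2,4) u(1)] .
  define k where "k = bdist E v w1"
  have "bdist E v w1 < bdist E v u" "bdist E v u \<le> Suc (bdist E v w1)"
    using u(2) w(1) bdist_adjacent[OF in_ball[OF u(1)] w(4)]
      bdist_adjacent(1)[OF in_ball[OF w(1)], of u] w(4) by (auto simp: badj_commute)
  moreover have "bdist E v w2 < bdist E v u" "bdist E v u \<le> Suc (bdist E v w2)"
    using u(2) w(2) bdist_adjacent[OF in_ball[OF u(1)] w(5)]
      bdist_adjacent(1)[OF in_ball[OF w(2)], of u] w(5) by (auto simp: badj_commute)
  ultimately have k: "bdist E v u = Suc k" "bdist E v w1 = k" "bdist E v w2 = k"
    unfolding k_def by linarith+
  obtain q where q: "q \<noteq> []" "hd q = w1" "last q = w2" "distinct q" "length q \<le> 2 * k + 1"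
    "successively (badj E) q" "\<forall>y\<in>set q. within_dist E k v y"
    using bfs_tree_path[OF _ _ w(3) k(2,3)] within_dist_bdist[OF in_ball] w(1,2) k(2,3) by metis
  have kR: "Suc k \<le> R" using bdist_le[OF in_ball[OF u(1)]] k(1) by simp
  have "u \<notin> set q" using q(7) k(1) bdist_le by fastforce
  moreover have "length q \<ge> 2" using q(1-3) w(3) by (cases q) (auto split: if_splits simp: Suc_le_eq)
  moreover have "closed_walk E (u # q)"
    using q(1,2,3,6) w(4,5) by (simp add: closed_walk_iff_successively successively_Cons badj_commute)
  ultimately have "u # q \<in> short_cycles E (2 * R)"
    unfolding short_cycles_def using q(4,5) kR by auto
  moreover have "set (u # q) \<subseteq> ball_R E R v"
    using u(1) cs(3) q(7) kR within_dist_mono unfolding ball_R_def by fastforce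
  ultimately show thesis by (rule that)
qed

section \<open>Degrees and balls\<close>

definition degree_le :: "(nat \<times> nat) set \<Rightarrow> nat \<Rightarrow> bool" where
  "degree_le E d \<longleftrightarrow> (\<forall>x. finite {y. badj E x y} \<and> card {y. badj E x y} \<le> d)"

lemma ball_R_0: "ball_R E 0 v = {v}"
  unfolding ball_R_def by (auto simp: within_dist_0_iff)

lemma ball_R_Suc: "ball_R E (Suc r) v = ball_R E r v \<union> (\<Union>x\<in>ball_R E r v. {y. badj E x y})"
  unfolding ball_R_def using within_dist_Suc_iff by blast

lemma card_ball_R_le:
  assumes "degree_le E d"
  shows "finite (ball_R E r v) \<and> card (ball_R E r v) \<le> (1 + d) ^ r"
proof (induction r)
  case 0
  then show ?case by (simp add: ball_R_0)
next
  case (Suc r)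
  let ?B = "ball_R E r v"
  have nbrs: "finite {y. badj E x y}" "card {y. badj E x y} \<le> d" for x
    using assms unfolding degree_le_def by auto
  have "card (ball_R E (Suc r) v) \<le> card ?B + card (\<Union>x\<in>?B. {y. badj E x y})"
    unfolding ball_R_Suc by (rule card_Un_le)
  also have "card (\<Union>x\<in>?B. {y. badj E x y}) \<le> (\<Sum>x\<in>?B. card {y. badj E x y})"
    using Suc nbrs by (intro card_UN_le) auto
  also have "\<dots> \<le> card ?B * d"
    using sum_mono[of ?B "\<lambda>x. card {y. badj E x y}" "\<lambda>_. d"] nbrs(2) by simp
  also have "card ?B + card ?B * d = card ?B * (1 + d)" by (simp add: algebra_simps)
  also have "\<dots> \<le> (1 + d) ^ r * (1 + d)" using Suc by (intro mult_right_mono) auto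
  finally show ?case using Suc nbrs by (simp add: ball_R_Suc mult.commute)
qed

lemma biregular_subset: "biregular n m d1 d2 E \<Longrightarrow> E \<subseteq> {..<n} \<times> {..<m}"
  unfolding biregular_def by simp

lemma biregular_finite_row: "biregular n m d1 d2 E \<Longrightarrow> finite {j. (i, j) \<in> E}"
  by (rule finite_subset[of _ "{..<m}"]) (auto dest: biregular_subset)

lemma biregular_finite_col: "biregular n m d1 d2 E \<Longrightarrow> finite {i. (i, j) \<in> E}"
  by (rule finite_subset[of _ "{..<n}"]) (auto dest: biregular_subset)

lemma biregular_card_row: "biregular n m d1 d2 E \<Longrightarrow> i < n \<Longrightarrow> card {j. (i, j) \<in> E} = d1"
  unfolding biregular_def by simp

lemma biregular_card_col: "biregular n m d1 d2 E \<Longrightarrow> j < m \<Longrightarrow> card {i. (i, j) \<in> E} = d2"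
  unfolding biregular_def by simp

lemma biregular_card_row_le: "biregular n m d1 d2 E \<Longrightarrow> card {j. (i, j) \<in> E} \<le> d1"
proof (cases "i < n")
  case False
  assume "biregular n m d1 d2 E"
  then have "{j. (i, j) \<in> E} = {}" using False by (auto dest: biregular_subset)
  then show ?thesis by simp
qed (simp add: biregular_card_row)

lemma biregular_card_col_le: "biregular n m d1 d2 E \<Longrightarrow> card {i. (i, j) \<in> E} \<le> d2"
proof (cases "j < m")
  case False
  assume "biregular n m d1 d2 E"
  then have "{i. (i, j) \<in> E} = {}" using False by (auto dest: biregular_subset)
  then show ?thesis by simp
qed (simp add: biregular_card_col)

lemma card_biregular: "biregular n m d1 d2 E \<Longrightarrow> card E = n * d1"
proof -
  assume b: "biregular n m d1 d2 E"
  have "E = (SIGMA i:{..<n}. {j. (i, j) \<in> E})" using biregular_subset[OF b] by auto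
  then have "card E = (\<Sum>i<n. card {j. (i, j) \<in> E})"
    using card_SigmaI[of "{..<n}" "\<lambda>i. {j. (i, j) \<in> E}"] biregular_finite_row[OF b] by simp
  then show ?thesis using biregular_card_row[OF b] by simp
qed

lemma finite_biregular_graphs: "finite (biregular_graphs n m d1 d2)"
proof -
  have "biregular_graphs n m d1 d2 \<subseteq> Pow ({..<n} \<times> {..<m})"
    unfolding biregular_graphs_def by (auto dest: biregular_subset)
  then show ?thesis by (rule finite_subset) simp
qed

lemma degree_le_biregular:
  assumes "biregular n m d1 d2 E" "d2 \<le> d1"
  shows "degree_le E d1"
  unfolding degree_le_def
proof
  fix x
  show "finite {y. badj E x y} \<and> card {y. badj E x y} \<le> d1"
  proof (cases x)
    case (Inl i)
    have "{y. badj E x y} = Inr ` {j. (i, j) \<in> E}" unfolding Inl by (auto elim: badj.elims)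
    then show ?thesis
      using biregular_finite_row[OF assms(1)] biregular_card_row_le[OF assms(1)]
      by (simp add: card_image)
  next
    case (Inr j)
    have "{y. badj E x y} = Inl ` {i. (i, j) \<in> E}" unfolding Inr by (auto elim: badj.elims)
    then show ?thesis
      using biregular_finite_col[OF assms(1)] biregular_card_col_le[OF assms(1), of j] assms(2)
      by (simp add: card_image)
  qed
qed

lemma within_dist_closed_walk_nth:
  assumes "closed_walk E c" "k < length c"
  shows "within_dist E k (c ! 0) (c ! k)"
  using assms(2)
proof (induction k)
  case 0
  show ?case by (rule within_dist_refl)
next
  case (Suc k)
  then have "badj E (c ! k) (c ! Suc k)"
    using assms(1) unfolding closed_walk_def by (metis Suc_lessD mod_less)
  then show ?case using Suc within_dist_Suc_iff by auto
qed

lemma within_dist_closed_walk: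
  assumes "closed_walk E c" "x \<in> set c" "y \<in> set c"
  shows "within_dist E (2 * length c) x y"
proof -
  obtain a b where ab: "a < length c" "b < length c" "x = c ! a" "y = c ! b"
    using assms(2,3) by (auto simp: in_set_conv_nth)
  have "within_dist E a x (c ! 0)"
    using within_dist_sym[OF within_dist_closed_walk_nth[OF assms(1) ab(1)]] ab(3) by simp
  moreover have "within_dist E b (c ! 0) y"
    using within_dist_closed_walk_nth[OF assms(1) ab(2)] ab(4) by simp
  ultimately have "within_dist E (a + b) x y" by (rule within_dist_trans)
  then show ?thesis by (rule within_dist_mono) (use ab(1,2) in simp)
qed

lemma sum_powers_le:
  fixes x y :: "'a :: linordered_semidom"
  assumes "0 \<le> x" "x \<le> y" "1 \<le> y"
  shows "(\<Sum>i\<le>L. x ^ i) \<le> of_nat (L + 1) * y ^ L"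
proof -
  have "x ^ i \<le> y ^ L" if "i \<le> L" for i
    using power_mono[OF assms(2,1), of i] power_increasing[OF that assms(3)] by (rule order_trans)
  then have "(\<Sum>i\<le>L. x ^ i) \<le> (\<Sum>i\<le>L. y ^ L)" by (intro sum_mono) auto
  then show ?thesis by simp
qed

text \<open>Every short cycle meeting c lies in the ball of radius 4L around a vertex of c.\<close>
lemma card_short_cycles_meeting_le:
  assumes "degree_le E d" "c \<in> short_cycles E L"
  shows "finite {c' \<in> short_cycles E L. set c \<inter> set c' \<noteq> {}} \<and>
         card {c' \<in> short_cycles E L. set c \<inter> set c' \<noteq> {}} \<le> (L + 1) * (1 + d) ^ (4 * L * L)"
proof -
  let ?B = "ball_R E (4 * L) (hd c)"
  have c: "closed_walk E c" "length c \<le> L" "c \<noteq> []" using assms(2) unfolding short_cycles_def by auto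
  have sub: "{c' \<in> short_cycles E L. set c \<inter> set c' \<noteq> {}} \<subseteq> {xs. set xs \<subseteq> ?B \<and> length xs \<le> L}"
  proof
    fix c' assume "c' \<in> {c' \<in> short_cycles E L. set c \<inter> set c' \<noteq> {}}"
    then have c': "closed_walk E c'" "length c' \<le> L" "set c \<inter> set c' \<noteq> {}"
      unfolding short_cycles_def by auto
    obtain x where x: "x \<in> set c" "x \<in> set c'" using c'(3) by auto
    have "within_dist E (2 * L + 2 * L) (hd c) y" if y: "y \<in> set c'" for y
    proof (rule within_dist_trans)
      show "within_dist E (2 * L) (hd c) x"
        by (rule within_dist_mono[OF within_dist_closed_walk[OF c(1) hd_in_set[OF c(3)] x(1)]])
          (use c(2) in simp)
      show "within_dist E (2 * L) x y"
        by (rule within_dist_mono[OF within_dist_closed_walk[OF c'(1) x(2) y]]) (use c'(2) in simp)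
    qed
    then show "c' \<in> {xs. set xs \<subseteq> ?B \<and> length xs \<le> L}"
      using c'(2) unfolding ball_R_def by auto
  qed
  have B: "finite ?B" "card ?B \<le> (1 + d) ^ (4 * L)" using card_ball_R_le[OF assms(1)] by auto
  have fin: "finite {xs. set xs \<subseteq> ?B \<and> length xs \<le> L}" by (rule finite_lists_length_le[OF B(1)])
  have "card {c' \<in> short_cycles E L. set c \<inter> set c' \<noteq> {}} \<le> (\<Sum>i\<le>L. card ?B ^ i)"
    using card_mono[OF fin sub] card_lists_length_le[OF B(1)] by simp
  also have "\<dots> \<le> (L + 1) * ((1 + d) ^ (4 * L)) ^ L"
    using sum_powers_le[of "card ?B" "(1 + d) ^ (4 * L)" L] B(2) by simp
  finally show ?thesis using finite_subset[OF sub fin] by (simp add: power_mult)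
qed

section \<open>Switchings\<close>

lemma sum_card_filter_swap:
  assumes "finite A" "finite B"
  shows "(\<Sum>a\<in>A. card {b \<in> B. P a b}) = (\<Sum>b\<in>B. card {a \<in> A. P a b})"
proof -
  have "(\<Sum>a\<in>A. card {b \<in> B. P a b}) = (\<Sum>a\<in>A. \<Sum>b\<in>B. if P a b then 1 else 0)"
    using sum.inter_filter[OF assms(2), of "\<lambda>_. 1 :: nat"] by simp
  also have "\<dots> = (\<Sum>b\<in>B. \<Sum>a\<in>A. if P a b then 1 else 0)" by (rule sum.swap)
  also have "\<dots> = (\<Sum>b\<in>B. card {a \<in> A. P a b})"
    using sum.inter_filter[OF assms(1), of "\<lambda>_. 1 :: nat"] by simp
  finally show ?thesis .
qed

lemma card_mult_le_double_counting:
  fixes S :: "'a \<Rightarrow> 'b set"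
  assumes "finite A" "finite B" "\<And>a. a \<in> A \<Longrightarrow> S a \<subseteq> B" "\<And>a. a \<in> A \<Longrightarrow> x \<le> card (S a)"
    "\<And>b. b \<in> B \<Longrightarrow> card {a \<in> A. b \<in> S a} \<le> y"
  shows "card A * x \<le> card B * y"
proof -
  have "card A * x \<le> (\<Sum>a\<in>A. card (S a))"
    using sum_mono[of A "\<lambda>_. x" "\<lambda>a. card (S a)"] assms(4) by (simp add: mult.commute)
  also have "\<dots> = (\<Sum>a\<in>A. card {b \<in> B. b \<in> S a})"
    using assms(3) by (intro sum.cong refl arg_cong[where f = card]) auto
  also have "\<dots> = (\<Sum>b\<in>B. card {a \<in> A. b \<in> S a})" by (rule sum_card_filter_swap[OF assms(1,2)])
  also have "\<dots> \<le> card B * y"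
    using sum_mono[of B "\<lambda>b. card {a \<in> A. b \<in> S a}" "\<lambda>_. y"] assms(5) by simp
  finally show ?thesis .
qed

definition switch_edges :: "nat \<Rightarrow> nat \<Rightarrow> nat \<Rightarrow> nat \<Rightarrow> (nat \<times> nat) set \<Rightarrow> (nat \<times> nat) set" where
  "switch_edges i j a b E = (E - {(i, j), (a, b)}) \<union> {(i, b), (a, j)}"

definition switchable :: "nat \<Rightarrow> nat \<Rightarrow> (nat \<times> nat) set \<Rightarrow> (nat \<times> nat) set \<Rightarrow> (nat \<times> nat) set" where
  "switchable i j F E = {(a, b) \<in> E. a \<noteq> i \<and> b \<noteq> j \<and> (i, b) \<notin> E \<and> (a, j) \<notin> E \<and> (a, b) \<notin> F}"

lemma switch_edges_switch_edges:
  assumes "(i, j) \<in> E" "(a, b) \<in> switchable i j F E"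
  shows "switch_edges i b a j (switch_edges i j a b E) = E"
  using assms unfolding switch_edges_def switchable_def by auto

lemma inj_on_switch_edges: "inj_on (\<lambda>(a, b). switch_edges i j a b E) (switchable i j F E)"
proof (rule inj_onI, clarify)
  fix a b a' b'
  assume ab: "(a, b) \<in> switchable i j F E" "(a', b') \<in> switchable i j F E"
    and eq: "switch_edges i j a b E = switch_edges i j a' b' E"
  have "(i, b) \<in> switch_edges i j a' b' E" "(a, j) \<in> switch_edges i j a' b' E"
    using eq unfolding switch_edges_def by auto
  then show "a = a' \<and> b = b'" using ab unfolding switch_edges_def switchable_def by auto
qed

lemma biregular_switch_edges:
  assumes b: "biregular n m d1 d2 E" and ij: "(i, j) \<in> E" and ab: "(a, b) \<in> switchable i j F E"
  shows "biregular n m d1 d2 (switch_edges i j a b E)"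
proof -
  let ?E' = "switch_edges i j a b E"
  have ab': "(a, b) \<in> E" "a \<noteq> i" "b \<noteq> j" "(i, b) \<notin> E" "(a, j) \<notin> E"
    using ab unfolding switchable_def by auto
  have rng: "i < n" "j < m" "a < n" "b < m" using biregular_subset[OF b] ij ab'(1) by auto
  have "j \<in> {y. (i, y) \<in> E}" "i \<in> {x. (x, j) \<in> E}" using ij by auto
  then have "0 < d1" "0 < d2"
    using biregular_card_row[OF b rng(1)] biregular_card_col[OF b rng(2)]
      biregular_finite_row[OF b, of i] biregular_finite_col[OF b, of j] card_gt_0_iff by fastforce+
  have row: "{y. (x, y) \<in> ?E'} = (if x = i then insert b ({y. (i, y) \<in> E} - {j})
      else if x = a then insert j ({y. (a, y) \<in> E} - {b}) else {y. (x, y) \<in> E})" for x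
    unfolding switch_edges_def using ab'(2,3) by auto
  have col: "{x. (x, y) \<in> ?E'} = (if y = j then insert a ({x. (x, j) \<in> E} - {i})
      else if y = b then insert i ({x. (x, b) \<in> E} - {a}) else {x. (x, y) \<in> E})" for y
    unfolding switch_edges_def using ab'(2,3) by auto
  have "card {y. (x, y) \<in> ?E'} = d1" if "x < n" for x
    unfolding row using that ij ab' \<open>0 < d1\<close> biregular_card_row[OF b] biregular_finite_row[OF b] by auto
  moreover have "card {x. (x, y) \<in> ?E'} = d2" if "y < m" for y
    unfolding col using that ij ab' \<open>0 < d2\<close> biregular_card_col[OF b] biregular_finite_col[OF b] by auto
  moreover have "?E' \<subseteq> {..<n} \<times> {..<m}"
    unfolding switch_edges_def using biregular_subset[OF b] rng by auto
  ultimately show ?thesis unfolding biregular_def by blast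
qed

lemma card_edges_near_row_le:
  assumes "biregular n m d1 d2 E"
  shows "card {(a, b) \<in> E. (i, b) \<in> E} \<le> d1 * d2"
proof -
  let ?S = "SIGMA b:{b. (i, b) \<in> E}. {a. (a, b) \<in> E}"
  have fin: "finite ?S" using biregular_finite_row[OF assms] biregular_finite_col[OF assms] by auto
  have "{(a, b) \<in> E. (i, b) \<in> E} \<subseteq> (\<lambda>(b, a). (a, b)) ` ?S" by auto
  then have "card {(a, b) \<in> E. (i, b) \<in> E} \<le> card ((\<lambda>(b, a). (a, b)) ` ?S)"
    by (rule card_mono[OF finite_imageI[OF fin]])
  also have "\<dots> \<le> card ?S" by (rule card_image_le[OF fin])
  also have "\<dots> = (\<Sum>b\<in>{b. (i, b) \<in> E}. card {a. (a, b) \<in> E})"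
    using biregular_finite_row[OF assms] biregular_finite_col[OF assms] by simp
  also have "\<dots> \<le> (\<Sum>b\<in>{b. (i, b) \<in> E}. d2)"
    by (intro sum_mono biregular_card_col_le[OF assms])
  also have "\<dots> \<le> d1 * d2" using biregular_card_row_le[OF assms] by simp
  finally show ?thesis .
qed

lemma card_edges_near_col_le:
  assumes "biregular n m d1 d2 E"
  shows "card {(a, b) \<in> E. (a, j) \<in> E} \<le> d1 * d2"
proof -
  let ?S = "SIGMA a:{a. (a, j) \<in> E}. {b. (a, b) \<in> E}"
  have "{(a, b) \<in> E. (a, j) \<in> E} \<subseteq> ?S" by auto
  then have "card {(a, b) \<in> E. (a, j) \<in> E} \<le> card ?S"
    by (rule card_mono[rotated]) (use biregular_finite_row[OF assms] biregular_finite_col[OF assms] in auto)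
  also have "\<dots> = (\<Sum>a\<in>{a. (a, j) \<in> E}. card {b. (a, b) \<in> E})"
    using biregular_finite_row[OF assms] biregular_finite_col[OF assms] by simp
  also have "\<dots> \<le> (\<Sum>a\<in>{a. (a, j) \<in> E}. d1)"
    by (intro sum_mono biregular_card_row_le[OF assms])
  also have "\<dots> \<le> d1 * d2" using biregular_card_col_le[OF assms, of j] by (simp add: mult.commute)
  finally show ?thesis .
qed

text \<open>An edge ab fails to be switchable with ij only if it meets i or j, is adjacent to
an edge at i or at j, or lies in F.\<close>
lemma card_switchable_ge:
  assumes b: "biregular n m d1 d2 E" and ij: "(i, j) \<in> E" and F: "finite F" "card F \<le> K"
  shows "n * d1 \<le> card (switchable i j F E) + (d1 + d2 + 2 * d1 * d2 + K)"
proof -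
  let ?X1 = "{(a, b) \<in> E. (i, b) \<in> E}" and ?X2 = "{(a, b) \<in> E. (a, j) \<in> E}"
  let ?row = "{i} \<times> {b. (i, b) \<in> E}" and ?col = "{a. (a, j) \<in> E} \<times> {j}"
  have fE: "finite E" using biregular_subset[OF b] finite_subset by blast
  have "E \<subseteq> switchable i j F E \<union> ?row \<union> ?col \<union> ?X1 \<union> ?X2 \<union> F"
    unfolding switchable_def by auto
  moreover have "finite (switchable i j F E \<union> ?row \<union> ?col \<union> ?X1 \<union> ?X2 \<union> F)"
    using fE F(1) biregular_finite_row[OF b] biregular_finite_col[OF b]
    by (auto intro: finite_subset[of _ E] simp: switchable_def)
  ultimately have "card E \<le> card (switchable i j F E \<union> ?row \<union> ?col \<union> ?X1 \<union> ?X2 \<union> F)"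
    by (rule card_mono[rotated])
  also have "\<dots> \<le> card (switchable i j F E) + card ?row + card ?col + card ?X1 + card ?X2 + card F"
    by (meson add_mono_thms_linordered_semiring(3) card_Un_le order_trans)
  also have "\<dots> \<le> card (switchable i j F E) + d1 + d2 + d1 * d2 + d1 * d2 + K"
    using card_edges_near_row_le[OF b, of i] card_edges_near_col_le[OF b, of j] F(2)
      biregular_card_row_le[OF b, of i] biregular_card_col_le[OF b, of j]
    by (simp add: card_cartesian_product)
  finally show ?thesis using card_biregular[OF b] by simp
qed

lemma card_switch_preimages_le:
  assumes b: "biregular n m d1 d2 E'"
  shows "finite {E. (i, j) \<in> E \<and> E' \<in> (\<lambda>(a, b). switch_edges i j a b E) ` switchable i j F E} \<and>
    card {E. (i, j) \<in> E \<and> E' \<in> (\<lambda>(a, b). switch_edges i j a b E) ` switchable i j F E} \<le> d1 * d2"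
proof -
  let ?Q = "{E. (i, j) \<in> E \<and> E' \<in> (\<lambda>(a, b). switch_edges i j a b E) ` switchable i j F E}"
  let ?P = "{a. (a, j) \<in> E'} \<times> {b. (i, b) \<in> E'}"
  have fin: "finite ?P" using biregular_finite_row[OF b] biregular_finite_col[OF b] by simp
  have preimage: "E \<in> (\<lambda>(a, b). switch_edges i b a j E') ` ?P" if E: "E \<in> ?Q" for E
  proof -
    have ij: "(i, j) \<in> E" using E by simp
    obtain a b where ab: "(a, b) \<in> switchable i j F E" "E' = switch_edges i j a b E"
      using E by auto
    have "E = switch_edges i b a j E'" using switch_edges_switch_edges[OF ij ab(1)] ab(2) by simp
    moreover have "(a, b) \<in> ?P" unfolding ab(2) switch_edges_def by simp
    ultimately show ?thesis by (intro image_eqI[where x = "(a, b)"]) simp_all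
  qed
  then have sub: "?Q \<subseteq> (\<lambda>(a, b). switch_edges i b a j E') ` ?P" by (rule subsetI)
  then have "card ?Q \<le> card ((\<lambda>(a, b). switch_edges i b a j E') ` ?P)"
    by (rule card_mono[OF finite_imageI[OF fin]])
  also have "\<dots> \<le> card ?P" by (rule card_image_le[OF fin])
  also have "\<dots> \<le> d1 * d2"
    using mult_le_mono[OF biregular_card_col_le[OF b, of j] biregular_card_row_le[OF b, of i]]
    by (simp add: card_cartesian_product mult.commute)
  finally show ?thesis using finite_subset[OF sub finite_imageI[OF fin]] by blast
qed

lemma card_containing_insert_le:
  fixes n m d1 d2 K :: nat
  defines "G \<equiv> biregular_graphs n m d1 d2"
  assumes F: "(i, j) \<notin> F" "finite F" "card F \<le> K"
  shows "card {E \<in> G. insert (i, j) F \<subseteq> E} * (n * d1 - (d1 + d2 + 2 * d1 * d2 + K))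
         \<le> card {E \<in> G. F \<subseteq> E} * (d1 * d2)"
proof (rule card_mult_le_double_counting[where S = "\<lambda>E. (\<lambda>(a, b). switch_edges i j a b E) ` switchable i j F E"])
  let ?A = "{E \<in> G. insert (i, j) F \<subseteq> E}"
  let ?S = "\<lambda>E. (\<lambda>(a, b). switch_edges i j a b E) ` switchable i j F E"
  have fin: "finite G" unfolding G_def by (rule finite_biregular_graphs)
  show "finite ?A" by (rule finite_subset[OF _ fin]) blast
  show "finite {E \<in> G. F \<subseteq> E}" by (rule finite_subset[OF _ fin]) blast
  show "?S E \<subseteq> {E \<in> G. F \<subseteq> E}" if "E \<in> ?A" for E
  proof -
    have E: "biregular n m d1 d2 E" "(i, j) \<in> E" "F \<subseteq> E"
      using that unfolding G_def biregular_graphs_def by auto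
    have "switch_edges i j a b E \<in> {E \<in> G. F \<subseteq> E}" if ab: "(a, b) \<in> switchable i j F E" for a b
    proof -
      have "biregular n m d1 d2 (switch_edges i j a b E)" by (rule biregular_switch_edges[OF E(1,2) ab])
      moreover have "F \<subseteq> switch_edges i j a b E"
        using F(1) E(3) ab unfolding switch_edges_def switchable_def by auto
      ultimately show ?thesis unfolding G_def biregular_graphs_def by simp
    qed
    then show ?thesis by (auto simp: image_subset_iff)
  qed
  show "n * d1 - (d1 + d2 + 2 * d1 * d2 + K) \<le> card (?S E)" if "E \<in> ?A" for E
  proof -
    have E: "biregular n m d1 d2 E" "(i, j) \<in> E"
      using that unfolding G_def biregular_graphs_def by auto
    have "card (?S E) = card (switchable i j F E)" by (rule card_image[OF inj_on_switch_edges])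
    then show ?thesis using card_switchable_ge[OF E F(2,3)] by linarith
  qed
  show "card {E \<in> ?A. E' \<in> ?S E} \<le> d1 * d2" if "E' \<in> {E \<in> G. F \<subseteq> E}" for E'
  proof -
    have b: "biregular n m d1 d2 E'" using that unfolding G_def biregular_graphs_def by simp
    note Q = card_switch_preimages_le[OF b, of i j F]
    have "{E \<in> ?A. E' \<in> ?S E} \<subseteq> {E. (i, j) \<in> E \<and> E' \<in> ?S E}" by (rule Collect_mono) blast
    then have "card {E \<in> ?A. E' \<in> ?S E} \<le> card {E. (i, j) \<in> E \<and> E' \<in> ?S E}"
      by (rule card_mono[OF conjunct1[OF Q]])
    also have "\<dots> \<le> d1 * d2" by (rule conjunct2[OF Q])
    finally show ?thesis .
  qed
qed

definition switch_ratio :: "nat \<Rightarrow> nat \<Rightarrow> nat \<Rightarrow> nat \<Rightarrow> real" where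
  "switch_ratio n d1 d2 K = real (d1 * d2) / real (n * d1 - (d1 + d2 + 2 * d1 * d2 + K))"

lemma card_containing_le:
  assumes "finite F" "card F \<le> K" "d1 + d2 + 2 * d1 * d2 + K < n * d1"
  shows "real (card {E \<in> biregular_graphs n m d1 d2. F \<subseteq> E})
         \<le> switch_ratio n d1 d2 K ^ card F * card (biregular_graphs n m d1 d2)"
  using assms(1,2)
proof (induction F rule: finite_induct)
  case empty
  then show ?case by simp
next
  case (insert x F)
  let ?G = "biregular_graphs n m d1 d2"
  let ?D = "n * d1 - (d1 + d2 + 2 * d1 * d2 + K)"
  obtain i j where x: "x = (i, j)" by fastforce
  have "0 < ?D" using assms(3) by simp
  then have D: "real ?D > 0" by (simp only: of_nat_0_less_iff)
  have "card {E \<in> ?G. insert x F \<subseteq> E} * ?D \<le> card {E \<in> ?G. F \<subseteq> E} * (d1 * d2)"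
    using card_containing_insert_le[of i j F K n m d1 d2] insert(1,2,4) unfolding x by simp
  then have "real (card {E \<in> ?G. insert x F \<subseteq> E}) * real ?D
      \<le> real (card {E \<in> ?G. F \<subseteq> E}) * real (d1 * d2)"
    by (simp only: of_nat_mult[symmetric] of_nat_le_iff)
  then have "real (card {E \<in> ?G. insert x F \<subseteq> E}) \<le> real (card {E \<in> ?G. F \<subseteq> E}) * real (d1 * d2) / real ?D"
    using D by (simp only: pos_le_divide_eq)
  also have "\<dots> = real (card {E \<in> ?G. F \<subseteq> E}) * switch_ratio n d1 d2 K"
    by (simp only: switch_ratio_def times_divide_eq_right)
  also have "\<dots> \<le> switch_ratio n d1 d2 K ^ card F * card ?G * switch_ratio n d1 d2 K"
    using insert(1,2,4) insert(3) by (intro mult_right_mono) (auto simp: switch_ratio_def)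
  finally show ?case using insert(1,2) by (simp add: mult_ac)
qed

lemma switch_ratio_le:
  assumes "2 * (d1 + d2 + 2 * d1 * d2 + K) \<le> n * d1" "0 < d1"
  shows "switch_ratio n d1 d2 K \<le> 2 * real d2 / real n"
proof -
  let ?c = "d1 + d2 + 2 * d1 * d2 + K"
  have "real (2 * ?c) \<le> real (n * d1)" using assms(1) by (simp only: of_nat_le_iff)
  moreover have "real (2 * ?c) = 2 * real ?c" by simp
  moreover have "x / 2 \<le> x - c" if "2 * c \<le> x" for x c :: real using that by linarith
  ultimately have "real (n * d1) / 2 \<le> real (n * d1) - real ?c" by metis
  also have "\<dots> = real (n * d1 - ?c)" by (rule of_nat_diff[symmetric], rule le_trans[OF _ assms(1)], simp)
  finally have half: "real (n * d1) / 2 \<le> real (n * d1 - ?c)" .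
  have "0 < 2 * ?c" using assms(2) by simp
  then have "0 < n * d1" using assms(1) by (rule less_le_trans)
  then have pos: "0 < real (n * d1) / 2" by simp
  have "switch_ratio n d1 d2 K \<le> real (d1 * d2) / (real (n * d1) / 2)"
    unfolding switch_ratio_def
    by (rule divide_left_mono[OF half _ mult_pos_pos[OF less_le_trans[OF pos half] pos]]) simp
  also have "\<dots> = 2 * real d2 / real n" using assms(2) by (simp add: field_simps)
  finally show ?thesis .
qed

section \<open>Counting pairs of disjoint short cycles\<close>

text \<open>The junk value (0, 0) is only taken on two vertices of the same side, which are never
adjacent.\<close>
fun bedge :: "nat + nat \<Rightarrow> nat + nat \<Rightarrow> nat \<times> nat" where
  "bedge (Inl i) (Inr j) = (i, j)"
| "bedge (Inr j) (Inl i) = (i, j)"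
| "bedge _ _ = (0, 0)"

definition cycle_edges :: "(nat + nat) list \<Rightarrow> (nat \<times> nat) set" where
  "cycle_edges c = (\<lambda>k. bedge (c ! k) (c ! (Suc k mod length c))) ` {..<length c}"

definition bip_vertices :: "nat \<Rightarrow> nat \<Rightarrow> (nat + nat) set" where
  "bip_vertices n m = Inl ` {..<n} \<union> Inr ` {..<m}"

lemma finite_cycle_edges: "finite (cycle_edges c)"
  unfolding cycle_edges_def by simp

lemma badj_iff_bedge: "badj E x y \<longleftrightarrow> badj UNIV x y \<and> bedge x y \<in> E"
  by (cases x; cases y) auto

lemma bedge_eq_bedge:
  assumes "badj UNIV x y" "badj UNIV x' y'" "bedge x y = bedge x' y'"
  shows "(x = x' \<and> y = y') \<or> (x = y' \<and> y = x')"
  using assms by (cases x; cases y; cases x'; cases y') auto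

lemma closed_walk_mono: "E \<subseteq> E' \<Longrightarrow> closed_walk E c \<Longrightarrow> closed_walk E' c"
  unfolding closed_walk_def using badj_mono by blast

lemma closed_walk_iff_cycle_edges: "closed_walk E c \<longleftrightarrow> closed_walk UNIV c \<and> cycle_edges c \<subseteq> E"
  unfolding closed_walk_def cycle_edges_def by (subst badj_iff_bedge) blast

lemma short_cycles_subgraph:
  assumes "E \<subseteq> K"
  shows "short_cycles E L = {c \<in> short_cycles K L. cycle_edges c \<subseteq> E}"
  using assms unfolding short_cycles_def
  by (subst (1 2) closed_walk_iff_cycle_edges) blast

lemma finite_bip_vertices: "finite (bip_vertices n m)"
  unfolding bip_vertices_def by simp

lemma card_bip_vertices: "card (bip_vertices n m) = n + m"
  unfolding bip_vertices_def by (subst card_Un_disjoint) (auto simp: card_image)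

lemma set_closed_walk_subset:
  assumes "E \<subseteq> {..<n} \<times> {..<m}" "closed_walk E c"
  shows "set c \<subseteq> bip_vertices n m"
proof
  fix x assume "x \<in> set c"
  then obtain k where k: "k < length c" "x = c ! k" by (auto simp: in_set_conv_nth)
  then have "badj E x (c ! (Suc k mod length c))" using assms(2) unfolding closed_walk_def by blast
  then show "x \<in> bip_vertices n m"
    using assms(1) unfolding bip_vertices_def by (cases x; cases "c ! (Suc k mod length c)") auto
qed

lemma short_cycles_subset_lists:
  assumes "E \<subseteq> {..<n} \<times> {..<m}"
  shows "short_cycles E L \<subseteq> {xs. set xs \<subseteq> bip_vertices n m \<and> length xs \<le> L}"
  using set_closed_walk_subset[OF assms] unfolding short_cycles_def by blast

lemma finite_short_cycles: "E \<subseteq> {..<n} \<times> {..<m} \<Longrightarrow> finite (short_cycles E L)"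
  by (rule finite_subset[OF short_cycles_subset_lists finite_lists_length_le[OF finite_bip_vertices]])

lemma mod_add_two_neq:
  fixes k l :: nat
  assumes "3 \<le> l" "k < l"
  shows "(k + 2) mod l \<noteq> k"
proof (cases "k + 2 < l")
  case False
  then have "(k + 2) mod l = k + 2 - l" using assms by (simp add: le_mod_geq)
  then show ?thesis using assms False by simp
qed simp

lemma card_cycle_edges:
  assumes "c \<in> short_cycles E L"
  shows "card (cycle_edges c) = length c"
proof -
  let ?l = "length c"
  have c: "3 \<le> ?l" "distinct c" "closed_walk UNIV c"
    using assms closed_walk_mono[OF subset_UNIV] unfolding short_cycles_def by auto
  have "inj_on (\<lambda>k. bedge (c ! k) (c ! (Suc k mod ?l))) {..<?l}"
  proof (rule inj_onI)
    fix k k' assume k: "k \<in> {..<?l}" "k' \<in> {..<?l}"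
      and eq: "bedge (c ! k) (c ! (Suc k mod ?l)) = bedge (c ! k') (c ! (Suc k' mod ?l))"
    have l0: "0 < ?l" using c(1) by linarith
    have "badj UNIV (c ! k) (c ! (Suc k mod ?l))" "badj UNIV (c ! k') (c ! (Suc k' mod ?l))"
      using c(3) k unfolding closed_walk_def by auto
    from bedge_eq_bedge[OF this eq]
    have "k = k' \<or> (k = Suc k' mod ?l \<and> Suc k mod ?l = k')"
      using nth_eq_iff_index_eq[OF c(2)] k l0 by auto
    moreover have "Suc (Suc k mod ?l) mod ?l \<noteq> k"
      using mod_add_two_neq[OF c(1), of k] k(1) by (simp add: mod_Suc_eq)
    ultimately show "k = k'" by auto
  qed
  then show ?thesis unfolding cycle_edges_def by (simp add: card_image)
qed

lemma cycle_edges_disjoint: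
  assumes "closed_walk E c" "closed_walk E c'" "set c \<inter> set c' = {}"
  shows "cycle_edges c \<inter> cycle_edges c' = {}"
proof -
  have "False" if k: "k < length c" "k' < length c'"
    and eq: "bedge (c ! k) (c ! (Suc k mod length c)) = bedge (c' ! k') (c' ! (Suc k' mod length c'))"
    for k k'
  proof -
    have "badj UNIV (c ! k) (c ! (Suc k mod length c))" "badj UNIV (c' ! k') (c' ! (Suc k' mod length c'))"
      using closed_walk_mono[OF subset_UNIV assms(1)] closed_walk_mono[OF subset_UNIV assms(2)] k
      unfolding closed_walk_def by auto
    from bedge_eq_bedge[OF this eq]
    have "c ! k = c' ! k' \<or> c ! k = c' ! (Suc k' mod length c')" by auto
    moreover have "c ! k \<in> set c" "c' ! k' \<in> set c'" using k by auto
    moreover have "c' ! (Suc k' mod length c') \<in> set c'"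
      using k(2) by (intro nth_mem mod_less_divisor) linarith
    ultimately show False using assms(3) by auto
  qed
  then show ?thesis unfolding cycle_edges_def by fastforce
qed

lemma sum_lists_power_length:
  fixes q :: real
  assumes "finite V"
  shows "(\<Sum>xs\<in>{xs. set xs \<subseteq> V \<and> length xs \<le> L}. q ^ length xs) = (\<Sum>l\<le>L. (card V * q) ^ l)"
proof -
  have "{xs. set xs \<subseteq> V \<and> length xs \<le> L} = (\<Union>l\<le>L. {xs. set xs \<subseteq> V \<and> length xs = l})" by auto
  then have "(\<Sum>xs\<in>{xs. set xs \<subseteq> V \<and> length xs \<le> L}. q ^ length xs)
      = (\<Sum>l\<le>L. \<Sum>xs\<in>{xs. set xs \<subseteq> V \<and> length xs = l}. q ^ length xs)"
    by (simp only:) (rule sum.UNION_disjoint, auto intro: finite_lists_length_eq[OF assms])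
  also have "\<dots> = (\<Sum>l\<le>L. \<Sum>xs\<in>{xs. set xs \<subseteq> V \<and> length xs = l}. q ^ l)"
    by (intro sum.cong refl) auto
  also have "\<dots> = (\<Sum>l\<le>L. (card V * q) ^ l)"
    by (simp add: card_lists_length_eq[OF assms] power_mult_distrib)
  finally show ?thesis .
qed

lemma sum_short_cycles_power_length_le:
  fixes q :: real
  assumes "0 \<le> q"
  shows "(\<Sum>c\<in>short_cycles ({..<n} \<times> {..<m}) L. q ^ length c) \<le> (\<Sum>l\<le>L. (real (n + m) * q) ^ l)"
proof -
  have "(\<Sum>c\<in>short_cycles ({..<n} \<times> {..<m}) L. q ^ length c)
      \<le> (\<Sum>xs\<in>{xs. set xs \<subseteq> bip_vertices n m \<and> length xs \<le> L}. q ^ length xs)"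
    using short_cycles_subset_lists[OF order_refl] assms
    by (intro sum_mono2 finite_lists_length_le finite_bip_vertices) auto
  also have "\<dots> = (\<Sum>l\<le>L. (real (n + m) * q) ^ l)"
    by (simp add: sum_lists_power_length[OF finite_bip_vertices] card_bip_vertices)
  finally show ?thesis .
qed

definition disjoint_cycle_pairs ::
  "(nat \<times> nat) set \<Rightarrow> nat \<Rightarrow> ((nat + nat) list \<times> (nat + nat) list) set" where
  "disjoint_cycle_pairs E L = {(c, c') \<in> short_cycles E L \<times> short_cycles E L. set c \<inter> set c' = {}}"

lemma finite_disjoint_cycle_pairs:
  "finite (short_cycles E L) \<Longrightarrow> finite (disjoint_cycle_pairs E L)"
  by (rule finite_subset[of _ "short_cycles E L \<times> short_cycles E L"])
    (auto simp: disjoint_cycle_pairs_def)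

lemma disjoint_cycle_pairs_subgraph:
  assumes "E \<subseteq> K"
  shows "disjoint_cycle_pairs E L =
    {(c, c') \<in> disjoint_cycle_pairs K L. cycle_edges c \<union> cycle_edges c' \<subseteq> E}"
  unfolding disjoint_cycle_pairs_def short_cycles_subgraph[OF assms] by auto

lemma card_cycle_edges_Un:
  assumes "(c, c') \<in> disjoint_cycle_pairs E L"
  shows "card (cycle_edges c \<union> cycle_edges c') = length c + length c'"
proof -
  have c: "c \<in> short_cycles E L" "c' \<in> short_cycles E L" "set c \<inter> set c' = {}"
    using assms unfolding disjoint_cycle_pairs_def by auto
  then have "cycle_edges c \<inter> cycle_edges c' = {}"
    using cycle_edges_disjoint unfolding short_cycles_def by blast
  then show ?thesis
    using card_Un_disjoint[OF finite_cycle_edges finite_cycle_edges] card_cycle_edges c(1,2) by simp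
qed

text \<open>A pair of vertex-disjoint cycles uses |c| + |c'| distinct edges, so by the switching bound
all of them are present with probability at most q^(|c| + |c'|).\<close>
lemma sum_card_disjoint_cycle_pairs_le:
  fixes n m d1 d2 L :: nat
  defines "G \<equiv> biregular_graphs n m d1 d2"
  assumes "d1 + d2 + 2 * d1 * d2 + 2 * L < n * d1"
  shows "(\<Sum>E\<in>G. real (card (disjoint_cycle_pairs E L)))
         \<le> card G * (\<Sum>c\<in>short_cycles ({..<n} \<times> {..<m}) L. switch_ratio n d1 d2 (2 * L) ^ length c) ^ 2"
proof -
  define q where "q = switch_ratio n d1 d2 (2 * L)"
  let ?S = "short_cycles ({..<n} \<times> {..<m}) L"
  let ?P = "disjoint_cycle_pairs ({..<n} \<times> {..<m}) L"
  let ?F = "\<lambda>(c, c'). cycle_edges c \<union> cycle_edges c'"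
  have finS: "finite ?S" by (rule finite_short_cycles[OF order_refl])
  have finP: "finite ?P" by (rule finite_disjoint_cycle_pairs[OF finS])
  have finG: "finite G" unfolding G_def by (rule finite_biregular_graphs)
  have q0: "0 \<le> q" unfolding q_def switch_ratio_def by simp
  have "disjoint_cycle_pairs E L = {p \<in> ?P. ?F p \<subseteq> E}" if "E \<in> G" for E
    using that unfolding G_def biregular_graphs_def
    by (auto simp: disjoint_cycle_pairs_subgraph[OF biregular_subset] case_prod_beta)
  then have "(\<Sum>E\<in>G. real (card (disjoint_cycle_pairs E L))) = real (\<Sum>E\<in>G. card {p \<in> ?P. ?F p \<subseteq> E})"
    by simp
  also have "\<dots> = (\<Sum>p\<in>?P. real (card {E \<in> G. ?F p \<subseteq> E}))"
    by (simp add: sum_card_filter_swap[OF finG finP])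
  also have "\<dots> \<le> (\<Sum>(c, c')\<in>?P. q ^ length c * q ^ length c' * card G)"
  proof (rule sum_mono)
    fix p assume "p \<in> ?P"
    then obtain c c' where cc: "p = (c, c')" "(c, c') \<in> ?P" by (cases p) auto
    have "length c + length c' \<le> 2 * L"
      using cc(2) unfolding disjoint_cycle_pairs_def short_cycles_def by auto
    then have "real (card {E \<in> G. ?F p \<subseteq> E}) \<le> q ^ (length c + length c') * card G"
      using card_containing_le[of "cycle_edges c \<union> cycle_edges c'" "2 * L" d1 d2 n m]
        card_cycle_edges_Un[OF cc(2)] assms(2)
      unfolding cc(1) G_def q_def by (simp add: finite_cycle_edges)
    then show "real (card {E \<in> G. ?F p \<subseteq> E})
        \<le> (case p of (c, c') \<Rightarrow> q ^ length c * q ^ length c' * card G)"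
      unfolding cc(1) by (simp add: power_add)
  qed
  also have "\<dots> \<le> (\<Sum>(c, c')\<in>?S \<times> ?S. q ^ length c * q ^ length c' * card G)"
    using finS q0 by (intro sum_mono2) (auto simp: disjoint_cycle_pairs_def)
  also have "\<dots> = card G * (\<Sum>c\<in>?S. q ^ length c) ^ 2"
    by (simp add: power2_eq_square sum_product sum.cartesian_product sum_distrib_left mult_ac case_prod_beta)
  finally show ?thesis unfolding q_def .
qed

lemma sum_short_cycles_switch_ratio_le:
  assumes "n * d1 = m * d2" "d2 \<le> d1" "0 < d1" "2 * (d1 + d2 + 2 * d1 * d2 + 2 * L) \<le> n * d1"
  shows "(\<Sum>c\<in>short_cycles ({..<n} \<times> {..<m}) L. switch_ratio n d1 d2 (2 * L) ^ length c)
         \<le> (real L + 1) * (4 * (1 + real d1)) ^ L"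
proof -
  let ?q = "switch_ratio n d1 d2 (2 * L)"
  have q0: "0 \<le> ?q" unfolding switch_ratio_def by simp
  have "0 < n" using assms(3,4) by (cases n) auto
  have "real (n + m) * ?q \<le> real (n + m) * (2 * real d2 / real n)"
    using switch_ratio_le[OF assms(4,3)] by (intro mult_left_mono) auto
  also have "\<dots> = 2 * real d2 + 2 * (real m * real d2) / real n"
    using \<open>0 < n\<close> by (simp add: field_simps)
  also have "real m * real d2 = real n * real d1" using assms(1) by (metis of_nat_mult)
  also have "2 * real d2 + 2 * (real n * real d1) / real n \<le> 4 * real d1"
    using \<open>0 < n\<close> assms(2) by simp
  finally have nmq: "real (n + m) * ?q \<le> 4 * real d1" .
  have "(\<Sum>c\<in>short_cycles ({..<n} \<times> {..<m}) L. ?q ^ length c) \<le> (\<Sum>l\<le>L. (real (n + m) * ?q) ^ l)"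
    by (rule sum_short_cycles_power_length_le[OF q0])
  also have "\<dots> \<le> of_nat (L + 1) * (4 * (1 + real d1)) ^ L"
    using nmq q0 by (intro sum_powers_le) auto
  finally show ?thesis by (simp add: add.commute)
qed

lemma card_cyclic_balls_le:
  assumes b: "biregular n m d1 d2 E" and "d2 \<le> d1"
  shows "card {i. i < n \<and> has_cycle_in E (ball_R E R (Inl i))}
         \<le> card (short_cycles E (2 * R)) * (1 + d1) ^ R"
proof -
  let ?S = "short_cycles E (2 * R)"
  let ?N = "\<lambda>c. {i. Inl i \<in> ball_R E R (hd c)}"
  have deg: "degree_le E d1" by (rule degree_le_biregular[OF assms])
  have finS: "finite ?S" by (rule finite_short_cycles[OF biregular_subset[OF b]])
  have sub: "{i. i < n \<and> has_cycle_in E (ball_R E R (Inl i))} \<subseteq> (\<Union>c\<in>?S. ?N c)"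
  proof safe
    fix i assume "has_cycle_in E (ball_R E R (Inl i))"
    then obtain c where c: "c \<in> ?S" "set c \<subseteq> ball_R E R (Inl i)" by (rule short_cycle_in_ball)
    have "c \<noteq> []" using c(1) unfolding short_cycles_def by auto
    then have "hd c \<in> ball_R E R (Inl i)" using c(2) hd_in_set by blast
    then have "Inl i \<in> ball_R E R (hd c)" unfolding ball_R_def by (simp add: within_dist_sym)
    then show "i \<in> (\<Union>c\<in>?S. ?N c)" using c(1) by blast
  qed
  have N: "finite (?N c) \<and> card (?N c) \<le> (1 + d1) ^ R" for c
  proof -
    have B: "finite (ball_R E R (hd c))" "card (ball_R E R (hd c)) \<le> (1 + d1) ^ R"
      using card_ball_R_le[OF deg] by auto
    have "finite (?N c)" using finite_vimageI[OF B(1), of Inl] by (simp add: vimage_def)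
    moreover have "card (?N c) \<le> card (ball_R E R (hd c))"
      by (rule card_inj_on_le[OF _ _ B(1), of Inl]) auto
    ultimately show ?thesis using B(2) by simp
  qed
  have "card {i. i < n \<and> has_cycle_in E (ball_R E R (Inl i))} \<le> card (\<Union>c\<in>?S. ?N c)"
    using finS N by (intro card_mono[OF _ sub]) auto
  also have "\<dots> \<le> (\<Sum>c\<in>?S. card (?N c))" by (rule card_UN_le[OF finS])
  also have "\<dots> \<le> (\<Sum>c\<in>?S. (1 + d1) ^ R)" using N by (intro sum_mono) blast
  also have "\<dots> = card ?S * (1 + d1) ^ R" by simp
  finally show ?thesis .
qed

lemma card_short_cycles_squared_le:
  assumes "degree_le E d" "finite (short_cycles E L)"
  shows "card (short_cycles E L) * card (short_cycles E L)
         \<le> card (disjoint_cycle_pairs E L) + card (short_cycles E L) * ((L + 1) * (1 + d) ^ (4 * L * L))"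
proof -
  let ?S = "short_cycles E L"
  let ?Z = "(L + 1) * (1 + d) ^ (4 * L * L)"
  let ?M = "SIGMA c:?S. {c' \<in> ?S. set c \<inter> set c' \<noteq> {}}"
  have sub: "?S \<times> ?S \<subseteq> disjoint_cycle_pairs E L \<union> ?M" unfolding disjoint_cycle_pairs_def by auto
  have fin: "finite (disjoint_cycle_pairs E L)" "finite ?M"
    using assms(2) finite_disjoint_cycle_pairs by auto
  have "card ?S * card ?S = card (?S \<times> ?S)" by (simp add: card_cartesian_product)
  also have "\<dots> \<le> card (disjoint_cycle_pairs E L \<union> ?M)" by (rule card_mono[OF finite_UnI[OF fin] sub])
  also have "\<dots> \<le> card (disjoint_cycle_pairs E L) + card ?M" by (rule card_Un_le)
  also have "card ?M = (\<Sum>c\<in>?S. card {c' \<in> ?S. set c \<inter> set c' \<noteq> {}})"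
    using assms(2) by (intro card_SigmaI) auto
  also have "\<dots> \<le> (\<Sum>c\<in>?S. ?Z)"
    using card_short_cycles_meeting_le[OF assms(1)] by (intro sum_mono) blast
  finally show ?thesis by simp
qed

section \<open>The probability bound\<close>

lemma diff_card_tau1:
  "real n - real (card (tau1 n E R)) = real (card {i. i < n \<and> has_cycle_in E (ball_R E R (Inl i))})"
proof -
  have "{..<n} = tau1 n E R \<union> {i. i < n \<and> has_cycle_in E (ball_R E R (Inl i))}"
    "tau1 n E R \<inter> {i. i < n \<and> has_cycle_in E (ball_R E R (Inl i))} = {}"
    unfolding tau1_def by auto
  then have "n = card (tau1 n E R) + card {i. i < n \<and> has_cycle_in E (ball_R E R (Inl i))}"
    by (metis card_Un_disjoint card_lessThan finite_Un finite_lessThan)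
  then show ?thesis by simp
qed

lemma card_short_cycles_gt:
  assumes b: "biregular n m d1 d2 E" "d2 \<le> d1"
    and many: "real n powr (-1/4) < (real n - real (card (tau1 n E R))) / real n"
  shows "real n powr (3/4) < real (card (short_cycles E (2 * R))) * (1 + real d1) ^ R"
proof -
  let ?X = "real (card {i. i < n \<and> has_cycle_in E (ball_R E R (Inl i))})"
  have "n \<noteq> 0" using many by (cases n) auto
  then have n: "0 < real n" by simp
  have "real n powr (-1/4) * real n = real n powr (-1/4) * real n powr 1" using n by simp
  also have "\<dots> = real n powr (-1/4 + 1)" by (rule powr_add[symmetric])
  finally have "real n powr (3/4) = real n powr (-1/4) * real n" by simp
  also have "\<dots> < ?X" using many n unfolding diff_card_tau1 by (simp add: field_simps)
  also have "\<dots> \<le> real (card (short_cycles E (2 * R)) * (1 + d1) ^ R)"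
    using card_cyclic_balls_le[OF b, of R] by (simp only: of_nat_le_iff)
  finally show ?thesis by simp
qed

lemma card_short_cycles_squared_le_twice:
  assumes "degree_le E d" "finite (short_cycles E L)"
    and "2 * ((L + 1) * (1 + d) ^ (4 * L * L)) \<le> card (short_cycles E L)"
  shows "card (short_cycles E L) * card (short_cycles E L) \<le> 2 * card (disjoint_cycle_pairs E L)"
proof -
  let ?s = "card (short_cycles E L)" and ?Z = "(L + 1) * (1 + d) ^ (4 * L * L)"
  have arith: "x \<le> 2 * y" if "x \<le> y + z" "2 * z \<le> x" for x y z :: nat
    using that by linarith
  have "2 * (?s * ?Z) \<le> ?s * ?s" using mult_le_mono2[OF assms(3), of ?s] by (simp add: mult_ac)
  then show ?thesis by (rule arith[OF card_short_cycles_squared_le[OF assms(1,2)]])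
qed

lemma card_disjoint_cycle_pairs_ge:
  assumes b: "biregular n m d1 d2 E" "d2 \<le> d1"
    and sparse: "2 * (2 * real R + 1) * (1 + real d1) ^ (16 * R * R + R) \<le> real n powr (3/4)"
    and many: "real n powr (-1/4) < (real n - real (card (tau1 n E R))) / real n"
  shows "real n powr (3/2) / (2 * (1 + real d1) ^ (2 * R)) \<le> real (card (disjoint_cycle_pairs E (2 * R)))"
proof -
  let ?s = "card (short_cycles E (2 * R))"
  let ?Z = "(2 * R + 1) * (1 + d1) ^ (4 * (2 * R) * (2 * R))"
  define B where "B = (1 + real d1) ^ R"
  have B: "1 \<le> B" unfolding B_def by simp
  have s: "real n powr (3/4) < ?s * B" using card_short_cycles_gt[OF b many] unfolding B_def .
  have "2 * real ?Z * B = 2 * (2 * real R + 1) * (1 + real d1) ^ (16 * R * R + R)"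
    unfolding B_def by (simp add: power_add algebra_simps)
  then have "2 * real ?Z * B < ?s * B" using sparse s by linarith
  then have "2 * real ?Z < real ?s" by (rule mult_right_less_imp_less) (use B in simp)
  moreover have "real (2 * ?Z) = 2 * real ?Z" by simp
  ultimately have "real (2 * ?Z) < real ?s" by (simp only:)
  then have "2 * ?Z \<le> ?s" by (simp only: of_nat_less_iff less_imp_le)
  then have "?s * ?s \<le> 2 * card (disjoint_cycle_pairs E (2 * R))"
    using card_short_cycles_squared_le_twice[OF degree_le_biregular[OF b]
        finite_short_cycles[OF biregular_subset[OF b(1)]]] by simp
  then have "real (?s * ?s) \<le> real (2 * card (disjoint_cycle_pairs E (2 * R)))"
    by (simp only: of_nat_le_iff)
  then have sq: "real ?s * real ?s \<le> 2 * real (card (disjoint_cycle_pairs E (2 * R)))" by simp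
  have "real n powr (3/4) / B < ?s" using s B by (simp add: field_simps)
  then have "(real n powr (3/4) / B) * (real n powr (3/4) / B) \<le> real ?s * real ?s"
    using B by (intro mult_mono) auto
  also have "(real n powr (3/4) / B) * (real n powr (3/4) / B) = real n powr (3/2) / (1 + real d1) ^ (2 * R)"
    unfolding B_def by (simp add: powr_add[symmetric] power_mult power2_eq_square power_mult_distrib)
  finally show ?thesis using sq by simp
qed

lemma switch_loss_le_half_edges:
  assumes "d2 \<le> d1" "0 < d1" "(4 + 4 * real L) * (1 + real d1) \<le> real n"
  shows "2 * (d1 + d2 + 2 * d1 * d2 + 2 * L) \<le> n * d1"
proof -
  have "(4 + 4 * real L) * (1 + real d1) = 4 + 4 * real d1 + 4 * real L + 4 * (real L * real d1)"
    by (simp add: algebra_simps)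
  moreover have "0 \<le> real L * real d1" by simp
  ultimately have "4 + 4 * real d1 + 4 * real L \<le> real n" using assms(3) by linarith
  then have n: "real d1 * (4 + 4 * real d1 + 4 * real L) \<le> real d1 * real n" by (intro mult_left_mono) auto
  have "real d1 * real d2 \<le> real d1 * real d1" using assms(1) by (intro mult_left_mono) auto
  moreover have "1 * real L \<le> real d1 * real L" using assms(2) by (intro mult_right_mono) auto
  ultimately have "real (2 * (d1 + d2 + 2 * d1 * d2 + 2 * L)) \<le> real (n * d1)"
    using n assms(1) by (simp add: algebra_simps)
  then show ?thesis by (simp only: of_nat_le_iff)
qed

lemma biregular_0_empty: "biregular n m 0 d2 E \<Longrightarrow> E = {}"
  using biregular_subset biregular_card_row_le biregular_finite_row by fastforce

lemma short_cycles_empty: "short_cycles {} L = {}"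
proof -
  have "\<not> closed_walk {} c" if "3 \<le> length c" for c
  proof
    assume "closed_walk {} c"
    moreover have "0 < length c" using that by linarith
    ultimately have "badj {} (c ! 0) (c ! (Suc 0 mod length c))"
      unfolding closed_walk_def by blast
    then show False by (cases "c ! 0"; cases "c ! (Suc 0 mod length c)") auto
  qed
  then show ?thesis unfolding short_cycles_def by blast
qed

lemma sum_card_disjoint_cycle_pairs_bound:
  assumes "n * d1 = m * d2" "d2 \<le> d1" "(4 + 4 * real L) * (1 + real d1) \<le> real n"
  shows "(\<Sum>E\<in>biregular_graphs n m d1 d2. real (card (disjoint_cycle_pairs E L)))
         \<le> card (biregular_graphs n m d1 d2) * ((real L + 1) * (4 * (1 + real d1)) ^ L) ^ 2"
proof (cases "d1 = 0")
  case True
  have "disjoint_cycle_pairs E L = {}" if "E \<in> biregular_graphs n m d1 d2" for E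
    using that biregular_0_empty[of n m d2 E] True
    by (simp add: biregular_graphs_def disjoint_cycle_pairs_def short_cycles_empty)
  then show ?thesis by simp
next
  case False
  have c: "2 * (d1 + d2 + 2 * d1 * d2 + 2 * L) \<le> n * d1"
    using switch_loss_le_half_edges[OF assms(2) _ assms(3)] False by simp
  have "d1 + d2 + 2 * d1 * d2 + 2 * L < 2 * (d1 + d2 + 2 * d1 * d2 + 2 * L)" using False by simp
  then have "d1 + d2 + 2 * d1 * d2 + 2 * L < n * d1" using c by (rule less_le_trans)
  then have "(\<Sum>E\<in>biregular_graphs n m d1 d2. real (card (disjoint_cycle_pairs E L)))
    \<le> card (biregular_graphs n m d1 d2)
      * (\<Sum>c\<in>short_cycles ({..<n} \<times> {..<m}) L. switch_ratio n d1 d2 (2 * L) ^ length c) ^ 2"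
    by (rule sum_card_disjoint_cycle_pairs_le)
  also have "\<dots> \<le> card (biregular_graphs n m d1 d2) * ((real L + 1) * (4 * (1 + real d1)) ^ L) ^ 2"
    using sum_short_cycles_switch_ratio_le[OF assms(1,2) _ c] False
    by (intro mult_left_mono power_mono sum_nonneg) (auto simp: switch_ratio_def ac_simps)
  finally show ?thesis .
qed

lemma card_filter_mult_le_sum:
  fixes f :: "'a \<Rightarrow> real"
  assumes "finite A" "\<And>x. x \<in> A \<Longrightarrow> P x \<Longrightarrow> T \<le> f x" "\<And>x. x \<in> A \<Longrightarrow> 0 \<le> f x"
  shows "real (card {x \<in> A. P x}) * T \<le> (\<Sum>x\<in>A. f x)"
proof -
  have "real (card {x \<in> A. P x}) * T = (\<Sum>x\<in>{x \<in> A. P x}. T)" by simp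
  also have "\<dots> \<le> (\<Sum>x\<in>{x \<in> A. P x}. f x)" using assms(2) by (intro sum_mono) auto
  also have "\<dots> \<le> (\<Sum>x\<in>A. f x)" using assms(1,3) by (intro sum_mono2) auto
  finally show ?thesis .
qed

text \<open>Markov's inequality, applied to the number of vertex-disjoint pairs of short cycles.\<close>
lemma prob_many_cyclic_balls_le:
  assumes "n * d1 = m * d2" "d2 \<le> d1"
    and dense: "(4 + 8 * real R) * (1 + real d1) \<le> real n"
    and sparse: "2 * (2 * real R + 1) * (1 + real d1) ^ (16 * R * R + R) \<le> real n powr (3/4)"
  shows "prob_bireg n m d1 d2 (\<lambda>E. (real n - real (card (tau1 n E R))) / real n > real n powr (-1/4))
         \<le> 2 * ((2 * real R + 1) * 4 ^ (2 * R)) ^ 2 * (1 + real d1) ^ (6 * R) * real n powr (-3/2)"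
proof -
  let ?G = "biregular_graphs n m d1 d2"
  let ?P = "\<lambda>E. (real n - real (card (tau1 n E R))) / real n > real n powr (-1/4)"
  define T where "T = real n powr (3/2) / (2 * (1 + real d1) ^ (2 * R))"
  define W where "W = ((2 * real R + 1) * (4 * (1 + real d1)) ^ (2 * R)) ^ 2"
  have "4 * 1 \<le> (4 + 8 * real R) * (1 + real d1)" by (intro mult_mono) auto
  then have n: "0 < real n" using dense by linarith
  have T: "0 < T" unfolding T_def using n by simp
  have "real (card {E \<in> ?G. ?P E}) * T \<le> (\<Sum>E\<in>?G. real (card (disjoint_cycle_pairs E (2 * R))))"
    using card_disjoint_cycle_pairs_ge[OF _ assms(2) sparse] finite_biregular_graphs
    unfolding T_def biregular_graphs_def by (intro card_filter_mult_le_sum) auto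
  also have "\<dots> \<le> card ?G * W"
    using sum_card_disjoint_cycle_pairs_bound[OF assms(1,2), of "2 * R"] dense
    unfolding W_def by (simp add: algebra_simps)
  finally have markov: "real (card {E \<in> ?G. ?P E}) * T \<le> card ?G * W" .
  have "prob_bireg n m d1 d2 ?P \<le> W / T"
  proof (cases "card ?G = 0")
    case False
    then show ?thesis
      using markov T unfolding prob_bireg_def by (simp add: field_simps)
  qed (use T in \<open>simp add: prob_bireg_def W_def\<close>)
  also have "W / T = 2 * (1 + real d1) ^ (2 * R) * W * real n powr (-3/2)"
    unfolding T_def using n by (simp add: field_simps powr_minus_divide)
  also have "W = ((2 * real R + 1) * 4 ^ (2 * R)) ^ 2 * (1 + real d1) ^ (4 * R)"
    unfolding W_def power_mult_distrib[of 4 "1 + real d1"]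
    by (simp add: power_mult_distrib flip: power_mult)
  also have "2 * (1 + real d1) ^ (2 * R) * (((2 * real R + 1) * 4 ^ (2 * R)) ^ 2 * (1 + real d1) ^ (4 * R))
      = 2 * ((2 * real R + 1) * 4 ^ (2 * R)) ^ 2 * (1 + real d1) ^ (6 * R)"
    by (simp add: power_add[symmetric])
  finally show ?thesis .
qed

lemma subpolynomial_power_smallo:
  fixes f :: "nat \<Rightarrow> real"
  assumes sub: "\<And>\<epsilon>. \<epsilon> > 0 \<Longrightarrow> f \<in> o(\<lambda>n. real n powr \<epsilon>)" and "0 < \<delta>"
  shows "(\<lambda>n. (1 + f n) ^ k) \<in> o(\<lambda>n. real n powr \<delta>)"
proof -
  have one: "(\<lambda>_. 1) \<in> o(\<lambda>n. real n powr \<epsilon>)" if "0 < \<epsilon>" for \<epsilon> :: real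
  proof -
    have p0: "(\<lambda>n. real n powr 0) \<in> o(\<lambda>n. real n powr \<epsilon>)"
      using that by (intro powr_smallo_iff[THEN iffD2] filterlim_real_sequentially) auto
    have ev: "eventually (\<lambda>n. real n powr 0 = 1) at_top"
      using eventually_gt_at_top[of 0] by eventually_elim simp
    show ?thesis by (rule iffD1[OF landau_o.small.in_cong[OF ev] p0])
  qed
  show ?thesis
  proof (cases "k = 0")
    case True
    then show ?thesis using one[OF assms(2)] by simp
  next
    case False
    have "(\<lambda>n. 1 + f n) \<in> o(\<lambda>n. real n powr (\<delta> / k))"
      using assms(2) False by (intro sum_in_smallo(1) one sub) auto
    then have "(\<lambda>n. (1 + f n) ^ k) \<in> o(\<lambda>n. (real n powr (\<delta> / k)) ^ k)"
      using False by (intro landau_o.small_power) auto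
    also have "(\<lambda>n. (real n powr (\<delta> / k)) ^ k) = (\<lambda>n. real n powr \<delta>)"
    proof
      fix n :: nat
      show "(real n powr (\<delta> / k)) ^ k = real n powr \<delta>"
        using False by (cases "n = 0") (simp_all add: powr_power)
    qed
    finally show ?thesis .
  qed
qed

lemma prob_bireg_nonneg: "0 \<le> prob_bireg n m d1 d2 P"
  unfolding prob_bireg_def by simp

lemma prob_many_cyclic_balls_bigo:
  fixes m d1 d2 :: "nat \<Rightarrow> nat" and R :: nat
  assumes edges: "\<And>n. n * d1 n = m n * d2 n" and ge: "\<And>n. d1 n \<ge> d2 n"
    and subpoly: "\<And>\<epsilon>::real. \<epsilon> > 0 \<Longrightarrow> (\<lambda>n. real (d1 n)) \<in> o(\<lambda>n. real n powr \<epsilon>)"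
  shows "(\<lambda>n. prob_bireg n (m n) (d1 n) (d2 n)
            (\<lambda>E. (real n - real (card (tau1 n E R))) / real n > real n powr (-1/4)))
         \<in> O(\<lambda>n. (1 + real (d1 n)) ^ (6 * R) * real n powr (-3/2))"
proof -
  let ?b = "\<lambda>n. 1 + real (d1 n)"
  have small: "(\<lambda>n. ?b n ^ k) \<in> o(\<lambda>n. real n powr \<delta>)" if "0 < \<delta>" for k \<delta>
    by (rule subpolynomial_power_smallo[OF subpoly that])
  have "eventually (\<lambda>n. norm (?b n ^ 1) \<le> 1 / (4 + 8 * real R) * norm (real n powr 1)) at_top"
    by (rule landau_o.smallD[OF small]) simp_all
  then have dense: "eventually (\<lambda>n. (4 + 8 * real R) * ?b n \<le> real n) at_top"
    by eventually_elim (simp add: field_simps)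
  have "eventually (\<lambda>n. norm (?b n ^ (16 * R * R + R))
      \<le> 1 / (2 * (2 * real R + 1)) * norm (real n powr (3/4))) at_top"
    by (rule landau_o.smallD[OF small]) simp_all
  then have sparse: "eventually (\<lambda>n. 2 * (2 * real R + 1) * ?b n ^ (16 * R * R + R) \<le> real n powr (3/4)) at_top"
    by eventually_elim (simp add: field_simps)
  have "eventually (\<lambda>n. norm (prob_bireg n (m n) (d1 n) (d2 n)
        (\<lambda>E. (real n - real (card (tau1 n E R))) / real n > real n powr (-1/4)))
      \<le> 2 * ((2 * real R + 1) * 4 ^ (2 * R)) ^ 2 * norm (?b n ^ (6 * R) * real n powr (-3/2))) at_top"
    using dense sparse
  proof eventually_elim
    case (elim n)
    then show ?case
      using prob_many_cyclic_balls_le[OF edges ge elim] prob_bireg_nonneg by (simp add: mult_ac)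
  qed
  then show ?thesis by (rule bigoI)
qed

theorem lemma5p1:
  fixes m d1 d2 :: "nat \<Rightarrow> nat" and R :: nat
  assumes edges: "\<And>n. n * d1 n = m n * d2 n"
    and ge: "\<And>n. d1 n \<ge> d2 n"
    and subpoly: "\<And>\<epsilon>::real. \<epsilon> > 0 \<Longrightarrow> (\<lambda>n. real (d1 n)) \<in> o(\<lambda>n. real n powr \<epsilon>)"
  shows "(\<lambda>n. prob_bireg n (m n) (d1 n) (d2 n)
            (\<lambda>E. (real n - real (card (tau1 n E R))) / real n > real n powr (-1/4)))
         \<in> o(\<lambda>n. real n powr (-5/4))"
proof -
  have "(\<lambda>n. prob_bireg n (m n) (d1 n) (d2 n)
            (\<lambda>E. (real n - real (card (tau1 n E R))) / real n > real n powr (-1/4)))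
         \<in> O(\<lambda>n. (1 + real (d1 n)) ^ (6 * R) * real n powr (-3/2))"
    by (rule prob_many_cyclic_balls_bigo[OF edges ge subpoly])
  also have "(\<lambda>n. (1 + real (d1 n)) ^ (6 * R) * real n powr (-3/2))
      \<in> o(\<lambda>n. real n powr (1/4) * real n powr (-3/2))"
    by (intro landau_o.small_big_mult subpolynomial_power_smallo[OF subpoly]) simp_all
  also have "(\<lambda>n. real n powr (1/4) * real n powr (-3/2)) = (\<lambda>n. real n powr (-5/4))"
    by (simp add: powr_add[symmetric])
  finally show ?thesis .
qed

end
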